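(* On $\mathbb{C}^2\otimes\mathbb{C}^2$ let $|\Phi^\pm\rangle=(|00\rangle\pm|11\rangle)/\sqrt2$, and for $\alpha,\beta\in(0,1)$ let $\sigma_1=\alpha|\Phi^+\rangle\langle\Phi^+|+(1-\alpha)|01\rangle\langle01|$ and $\sigma_2=\beta|\Phi^-\rangle\langle\Phi^-|+(1-\beta)|10\rangle\langle10|$, with supports $s_1=\mathrm{span}\{|\Phi^+\rangle,|01\rangle\}$ and $s_2=\mathrm{span}\{|\Phi^-\rangle,|10\rangle\}$. Then any two unit vectors $|\psi_1\rangle\in s_1$, $|\psi_2\rangle\in s_2$ are perfectly distinguishable by LOCC, but $\{\sigma_1,\sigma_2\}$ is not perfectly distinguishable by LOCC (indeed not even by any separable POVM).
   Context: The two parties hold the two qubits. A set of states is perfectly distinguishable by LOCC if there is an LOCC protocol identifying the state with probability $1$; equivalently there is an LOCC-implementable POVM $\{\Pi_i\}$ with $\mathrm{Tr}(\Pi_i\sigma_j)=\delta_{ij}$. A separable POVM is one whose elements are nonnegative combinations of tensor products of positive semidefinite operators on the two qubits. The support of a density matrix is the span of its eigenvectors with nonzero eigenvalues. *)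

theory Defs
  imports "Jordan_Normal_Form.Matrix" "Jordan_Normal_Form.Schur_Decomposition"
          "HOL-Library.Complex_Order"
begin

text \<open>Two qubits: C^2 (x) C^2 = C^4 with basis |00>,|01>,|10>,|11> = indices 0,1,2,3;
  the first tensor factor (Alice) is index div 2, the second (Bob) is index mod 2.\<close>

definition tensor2 :: "complex mat \<Rightarrow> complex mat \<Rightarrow> complex mat" where
  "tensor2 A B = mat 4 4 (\<lambda>(i,j). A $$ (i div 2, j div 2) * B $$ (i mod 2, j mod 2))"

definition msum :: "nat \<Rightarrow> complex mat list \<Rightarrow> complex mat" where
  "msum n xs = foldr (+) xs (0\<^sub>m n n)"

definition mtrace :: "complex mat \<Rightarrow> complex" where
  "mtrace A = (\<Sum>i<dim_row A. A $$ (i,i))"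

definition psd :: "nat \<Rightarrow> complex mat \<Rightarrow> bool" where
  "psd n A \<longleftrightarrow> A \<in> carrier_mat n n \<and>
     (\<forall>v \<in> carrier_vec n. 0 \<le> conjugate v \<bullet> (A *\<^sub>v v))"

definition ket :: "nat \<Rightarrow> complex vec" where
  "ket i = unit_vec 4 i"

definition proj :: "complex vec \<Rightarrow> complex mat" where
  "proj v = mat 4 4 (\<lambda>(i,j). v $ i * cnj (v $ j))"

definition unit_state :: "complex vec \<Rightarrow> bool" where
  "unit_state v \<longleftrightarrow> v \<in> carrier_vec 4 \<and> (\<Sum>i<4. (cmod (v $ i))\<^sup>2) = 1"

definition phi_plus :: "complex vec" where
  "phi_plus = complex_of_real (1 / sqrt 2) \<cdot>\<^sub>v (ket 0 + ket 3)"

definition phi_minus :: "complex vec" where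
  "phi_minus = complex_of_real (1 / sqrt 2) \<cdot>\<^sub>v (ket 0 - ket 3)"

definition sigma1 :: "real \<Rightarrow> complex mat" where
  "sigma1 \<alpha> = complex_of_real \<alpha> \<cdot>\<^sub>m proj phi_plus + complex_of_real (1 - \<alpha>) \<cdot>\<^sub>m proj (ket 1)"

definition sigma2 :: "real \<Rightarrow> complex mat" where
  "sigma2 \<beta> = complex_of_real \<beta> \<cdot>\<^sub>m proj phi_minus + complex_of_real (1 - \<beta>) \<cdot>\<^sub>m proj (ket 2)"

definition s1 :: "complex vec set" where
  "s1 = {a \<cdot>\<^sub>v phi_plus + b \<cdot>\<^sub>v ket 1 | a b. True}"

definition s2 :: "complex vec set" where
  "s2 = {a \<cdot>\<^sub>v phi_minus + b \<cdot>\<^sub>v ket 2 | a b. True}"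

text \<open>Finite-round LOCC protocols, described by their leaves: each leaf is a pair
  (K, l) of the accumulated (product) Kraus operator K of the branch and the
  announced guess l.\<close>

inductive locc_tree :: "(complex mat \<times> nat) list \<Rightarrow> bool" where
  stop: "locc_tree [(1\<^sub>m 4, l)]"
| alice: "\<lbrakk> \<forall>A \<in> set As. A \<in> carrier_mat 2 2;
           msum 2 (map (\<lambda>A. mat_adjoint A * A) As) = 1\<^sub>m 2;
           length Ls = length As; \<forall>L \<in> set Ls. locc_tree L \<rbrakk>
         \<Longrightarrow> locc_tree (concat (map (\<lambda>(A, L). map (\<lambda>(K, l). (K * tensor2 A (1\<^sub>m 2), l)) L)
                                   (zip As Ls)))"
| bob: "\<lbrakk> \<forall>B \<in> set Bs. B \<in> carrier_mat 2 2;
           msum 2 (map (\<lambda>B. mat_adjoint B * B) Bs) = 1\<^sub>m 2;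
           length Ls = length Bs; \<forall>L \<in> set Ls. locc_tree L \<rbrakk>
         \<Longrightarrow> locc_tree (concat (map (\<lambda>(B, L). map (\<lambda>(K, l). (K * tensor2 (1\<^sub>m 2) B, l)) L)
                                   (zip Bs Ls)))"

definition povm_elem :: "(complex mat \<times> nat) list \<Rightarrow> nat \<Rightarrow> complex mat" where
  "povm_elem L i = msum 4 (map (\<lambda>(K, l). mat_adjoint K * K) (filter (\<lambda>(K, l). l = i) L))"

definition locc_distinguishable :: "complex mat list \<Rightarrow> bool" where
  "locc_distinguishable \<rho>s \<longleftrightarrow> (\<exists>L. locc_tree L \<and> (\<forall>(K, l) \<in> set L. l < length \<rho>s) \<and>
     (\<forall>i < length \<rho>s. \<forall>j < length \<rho>s.
        mtrace (povm_elem L i * \<rho>s ! j) = (if i = j then 1 else 0)))"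

definition separable_op :: "complex mat \<Rightarrow> bool" where
  "separable_op P \<longleftrightarrow> (\<exists>cs :: (real \<times> complex mat \<times> complex mat) list.
     (\<forall>(c, A, B) \<in> set cs. c \<ge> 0 \<and> psd 2 A \<and> psd 2 B) \<and>
     P = msum 4 (map (\<lambda>(c, A, B). complex_of_real c \<cdot>\<^sub>m tensor2 A B) cs))"

definition sep_distinguishable :: "complex mat list \<Rightarrow> bool" where
  "sep_distinguishable \<rho>s \<longleftrightarrow> (\<exists>Pm :: nat \<Rightarrow> complex mat.
     (\<forall>i < length \<rho>s. separable_op (Pm i)) \<and>
     msum 4 (map Pm [0..<length \<rho>s]) = 1\<^sub>m 4 \<and>
     (\<forall>i < length \<rho>s. \<forall>j < length \<rho>s.
        mtrace (Pm i * \<rho>s ! j) = (if i = j then 1 else 0)))"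

end

theory Submission
  imports Defs
begin

text \<open>
  (1) Every finite-round LOCC protocol has product Kraus operators K = X (x) Y whose
      squares K^H K sum to the identity.  Hence the POVM it implements is separable, and
      perfect LOCC discrimination implies perfect discrimination by a separable POVM.
      So it suffices to show that {sigma1, sigma2} admits no separable perfect POVM.

  (2) For positive semidefinite 2x2 matrices A, B the number tr((A (x) B) sigma_k) is real
      and nonnegative, and it vanishes only if A_00 B_00 = 0 (an AM-GM estimate on the
      entries).  Summing over a separable decomposition, every separable P with
      tr(P sigma_k) = 0 has P_00 = 0.  Perfect discrimination forces tr(P_1 sigma1) = 0 and
      tr(P_0 sigma2) = 0, hence (P_0 + P_1)_00 = 0, contradicting P_0 + P_1 = 1.

  (3) For pure states psi1 in s1, psi2 in s2 we build Walgate's two-round protocol: Alice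
      measures in an orthonormal basis {u, u'} for which Bob's conditional states of psi1
      and psi2 are orthogonal for both outcomes (such a u exists because on s1 x s2 the
      relevant sesquilinear form is traceless and triangular); Bob then measures along
      his conditional state of psi2.  Every branch guessing 1 annihilates psi1 and every
      branch guessing 0 annihilates psi2, which yields perfect discrimination.
\<close>

lemma sum_lessThan_4: "(\<Sum>i<4. f i) = f (0::nat) + f 1 + f 2 + (f 3 :: 'a::comm_monoid_add)"
  by (simp add: eval_nat_numeral add.assoc)

lemma sum_atLeast0_4: "(\<Sum>i=0..<4. f i) = f (0::nat) + f 1 + f 2 + (f 3 :: 'a::comm_monoid_add)"
  by (simp add: eval_nat_numeral add.assoc atLeast0LessThan)

lemma sum_atLeast0_2: "(\<Sum>i=0..<2. f i) = f (0::nat) + (f 1 :: 'a::comm_monoid_add)"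
  by (simp add: eval_nat_numeral atLeast0LessThan)

lemma less_4_cases: "(i::nat) < 4 \<longleftrightarrow> i = 0 \<or> i = 1 \<or> i = 2 \<or> i = 3" by auto

lemma less_2_cases: "(i::nat) < 2 \<longleftrightarrow> i = 0 \<or> i = 1" by auto

lemma adjoint_dims [simp]:
  "dim_row (mat_adjoint A) = dim_col A" "dim_col (mat_adjoint A) = dim_row A"
  by (auto simp: mat_adjoint_def)

lemma adjoint_index [simp]:
  "i < dim_col A \<Longrightarrow> j < dim_row A \<Longrightarrow> mat_adjoint A $$ (i,j) = cnj (A $$ (j,i))"
  by (simp add: mat_adjoint_def mat_of_rows_def)

lemma adjoint_carrier [simp]: "A \<in> carrier_mat n m \<Longrightarrow> mat_adjoint A \<in> carrier_mat m n"
  by auto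

lemma adjoint_one [simp]: "mat_adjoint (1\<^sub>m n :: complex mat) = 1\<^sub>m n"
  by (rule eq_matI) auto

lemma adjoint_mult:
  fixes A B :: "complex mat"
  assumes "A \<in> carrier_mat n m" "B \<in> carrier_mat m k"
  shows "mat_adjoint (A * B) = mat_adjoint B * mat_adjoint A"
proof (rule eq_matI)
  fix i j assume "i < dim_row (mat_adjoint B * mat_adjoint A)" "j < dim_col (mat_adjoint B * mat_adjoint A)"
  then have i: "i < k" and j: "j < n" using assms by auto
  have "mat_adjoint (A * B) $$ (i, j) = (\<Sum>l = 0..<m. cnj (A $$ (j, l)) * cnj (B $$ (l, i)))"
    using i j assms by (simp add: index_mult_mat scalar_prod_def)
  also have "\<dots> = (mat_adjoint B * mat_adjoint A) $$ (i, j)"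
    using i j assms by (auto simp: index_mult_mat scalar_prod_def intro: sum.cong)
  finally show "mat_adjoint (A * B) $$ (i, j) = (mat_adjoint B * mat_adjoint A) $$ (i, j)" .
qed (use assms in auto)

lemma adjoint_square_carrier [simp]:
  "K \<in> carrier_mat n n \<Longrightarrow> mat_adjoint K * (K :: complex mat) \<in> carrier_mat n n"
  by (rule mult_carrier_mat[of _ n n]) auto

lemma adjoint_square_mult:
  fixes K T :: "complex mat"
  assumes "K \<in> carrier_mat n n" "T \<in> carrier_mat n n"
  shows "mat_adjoint (K * T) * (K * T) = mat_adjoint T * (mat_adjoint K * K) * T"
  using assms by (simp add: adjoint_mult assoc_mult_mat[of _ n n _ n _ n])

lemma tensor2_carrier [simp]: "tensor2 A B \<in> carrier_mat 4 4"
  by (simp add: tensor2_def)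

lemma tensor2_dims [simp]: "dim_row (tensor2 A B) = 4" "dim_col (tensor2 A B) = 4"
  by (simp_all add: tensor2_def)

lemma tensor2_index:
  "i < 4 \<Longrightarrow> j < 4 \<Longrightarrow> tensor2 A B $$ (i,j) = A $$ (i div 2, j div 2) * B $$ (i mod 2, j mod 2)"
  by (simp add: tensor2_def)

lemma tensor2_mult:
  assumes "A \<in> carrier_mat 2 2" "B \<in> carrier_mat 2 2" "C \<in> carrier_mat 2 2" "D \<in> carrier_mat 2 2"
  shows "tensor2 A B * tensor2 C D = tensor2 (A * C) (B * D)"
  by (rule eq_matI)
     (use assms in \<open>auto simp: less_4_cases tensor2_index index_mult_mat scalar_prod_def
                         sum_atLeast0_4 sum_atLeast0_2 algebra_simps\<close>)

lemma tensor2_adjoint: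
  assumes "A \<in> carrier_mat 2 2" "B \<in> carrier_mat 2 2"
  shows "mat_adjoint (tensor2 A B) = tensor2 (mat_adjoint A) (mat_adjoint B)"
  by (rule eq_matI) (use assms in \<open>auto simp: less_4_cases tensor2_index\<close>)

lemma tensor2_one: "tensor2 (1\<^sub>m 2) (1\<^sub>m 2) = 1\<^sub>m 4"
  by (rule eq_matI) (auto simp: tensor2_index less_4_cases)

lemma tensor2_add_left:
  assumes "A \<in> carrier_mat 2 2" "B \<in> carrier_mat 2 2"
  shows "tensor2 (A + B) C = tensor2 A C + tensor2 B C"
  by (rule eq_matI) (use assms in \<open>auto simp: tensor2_index algebra_simps\<close>)

lemma tensor2_add_right:
  assumes "A \<in> carrier_mat 2 2" "B \<in> carrier_mat 2 2"
  shows "tensor2 C (A + B) = tensor2 C A + tensor2 C B"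
  by (rule eq_matI) (use assms in \<open>auto simp: tensor2_index algebra_simps\<close>)

lemma tensor2_zero_left: "tensor2 (0\<^sub>m 2 2) C = 0\<^sub>m 4 4"
  by (rule eq_matI) (auto simp: tensor2_index)

lemma tensor2_zero_right: "tensor2 C (0\<^sub>m 2 2) = 0\<^sub>m 4 4"
  by (rule eq_matI) (auto simp: tensor2_index)

lemma tensor2_adjoint_square:
  assumes "A \<in> carrier_mat 2 2" "B \<in> carrier_mat 2 2"
  shows "mat_adjoint (tensor2 A B) * tensor2 A B = tensor2 (mat_adjoint A * A) (mat_adjoint B * B)"
  using assms by (simp add: tensor2_adjoint tensor2_mult)

lemma msum_Nil [simp]: "msum n [] = 0\<^sub>m n n"
  by (simp add: msum_def)

lemma msum_Cons [simp]: "msum n (x # xs) = x + msum n xs"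
  by (simp add: msum_def)

lemma msum_carrier: "\<forall>x\<in>set xs. x \<in> carrier_mat n n \<Longrightarrow> msum n xs \<in> carrier_mat n n"
  by (induction xs) auto

lemma msum_append:
  assumes "\<forall>x\<in>set xs. x \<in> carrier_mat n n" "\<forall>x\<in>set ys. x \<in> carrier_mat n n"
  shows "msum n (xs @ ys) = msum n xs + msum n ys"
  using assms
proof (induction xs)
  case Nil
  then show ?case using msum_carrier[of ys n] by simp
next
  case (Cons a xs)
  then show ?case
    using msum_carrier[of ys n] msum_carrier[of xs n] assoc_add_mat[of a n n "msum n xs" "msum n ys"]
    by simp
qed

lemma msum_filter_split:
  assumes "\<forall>x\<in>set xs. f x \<in> carrier_mat n n"
  shows "msum n (map f xs) = msum n (map f (filter P xs)) + msum n (map f (filter (\<lambda>x. \<not> P x) xs))"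
  using assms
proof (induction xs)
  case (Cons x xs)
  let ?S = "msum n (map f (filter P xs))" and ?T = "msum n (map f (filter (\<lambda>x. \<not> P x) xs))"
  have c: "f x \<in> carrier_mat n n" "?S \<in> carrier_mat n n" "?T \<in> carrier_mat n n"
    using Cons.prems by (auto intro!: msum_carrier)
  have IH: "msum n (map f xs) = ?S + ?T"
    using Cons by simp
  show ?case
  proof (cases "P x")
    case True
    then show ?thesis using IH c by (simp add: assoc_add_mat)
  next
    case False
    have "f x + (?S + ?T) = (f x + ?S) + ?T" using c by (simp add: assoc_add_mat)
    also have "f x + ?S = ?S + f x" using c(1,2) by (rule comm_add_mat)
    also have "(?S + f x) + ?T = ?S + (f x + ?T)" using c by (simp add: assoc_add_mat)
    finally show ?thesis using IH False by simp
  qed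
qed simp

lemma msum_conjugate:
  assumes "T \<in> carrier_mat n n" "\<forall>x\<in>set xs. f x \<in> carrier_mat n n"
  shows "msum n (map (\<lambda>x. mat_adjoint T * f x * T) xs) = mat_adjoint T * msum n (map f xs) * T"
  using assms(2)
proof (induction xs)
  case (Cons a xs)
  have c: "msum n (map f xs) \<in> carrier_mat n n" using Cons by (intro msum_carrier) auto
  have "mat_adjoint T * (f a + msum n (map f xs)) * T
      = (mat_adjoint T * f a + mat_adjoint T * msum n (map f xs)) * T"
    using c Cons assms(1) by (subst mult_add_distrib_mat[of _ n n]) auto
  also have "\<dots> = mat_adjoint T * f a * T + mat_adjoint T * msum n (map f xs) * T"
    using c Cons assms(1) by (subst add_mult_distrib_mat[of _ n n]) auto
  finally show ?case using Cons by simp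
qed (use assms(1) in simp)

lemma msum_tensor_left:
  "\<forall>x\<in>set xs. f x \<in> carrier_mat 2 2 \<Longrightarrow>
   msum 4 (map (\<lambda>x. tensor2 (f x) C) xs) = tensor2 (msum 2 (map f xs)) C"
  by (induction xs) (auto simp: tensor2_zero_left tensor2_add_left msum_carrier)

lemma msum_tensor_right:
  "\<forall>x\<in>set xs. f x \<in> carrier_mat 2 2 \<Longrightarrow>
   msum 4 (map (\<lambda>x. tensor2 C (f x)) xs) = tensor2 C (msum 2 (map f xs))"
  by (induction xs) (auto simp: tensor2_zero_right tensor2_add_right msum_carrier)

lemma mtrace_add:
  assumes "X \<in> carrier_mat n n" "Y \<in> carrier_mat n n"
  shows "mtrace (X + Y) = mtrace X + mtrace Y"
  using assms by (simp add: mtrace_def sum.distrib)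

lemma mtrace_smult:
  assumes "X \<in> carrier_mat n n"
  shows "mtrace (c \<cdot>\<^sub>m X) = c * mtrace X"
  using assms by (simp add: mtrace_def sum_distrib_left)

lemma mtrace_zero [simp]: "mtrace (0\<^sub>m n n) = 0"
  by (simp add: mtrace_def)

lemma mtrace_mult_4:
  assumes "T \<in> carrier_mat 4 4" "S \<in> carrier_mat 4 4"
  shows "mtrace (T * S) = (\<Sum>i<4. \<Sum>k<4. T $$ (i,k) * S $$ (k,i))"
  using assms by (simp add: mtrace_def index_mult_mat scalar_prod_def atLeast0LessThan)

section \<open>LOCC protocols implement separable POVMs\<close>

definition kraus_square :: "complex mat \<times> nat \<Rightarrow> complex mat" where
  "kraus_square = (\<lambda>(K, l). mat_adjoint K * K)"

lemma povm_elem_kraus_square: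
  "povm_elem L i = msum 4 (map kraus_square (filter (\<lambda>(K, l). l = i) L))"
  unfolding povm_elem_def kraus_square_def ..

text \<open>One round of a protocol: the party applies the local operator T A for the outcome
  A and continues with the sub-protocol belonging to A.  Both LOCC rules have this shape.\<close>

definition local_round ::
  "(complex mat \<Rightarrow> complex mat) \<Rightarrow> complex mat list \<Rightarrow> (complex mat \<times> nat) list list \<Rightarrow>
   (complex mat \<times> nat) list" where
  "local_round T As Ls = concat (map (\<lambda>(A, L). map (\<lambda>(K, l). (K * T A, l)) L) (zip As Ls))"

abbreviation alice_op :: "complex mat \<Rightarrow> complex mat" where
  "alice_op A \<equiv> tensor2 A (1\<^sub>m 2)"

abbreviation bob_op :: "complex mat \<Rightarrow> complex mat" where
  "bob_op B \<equiv> tensor2 (1\<^sub>m 2) B"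

lemma locc_rule_rounds:
  "concat (map (\<lambda>(A, L). map (\<lambda>(K, l). (K * tensor2 A (1\<^sub>m 2), l)) L) (zip As Ls)) = local_round alice_op As Ls"
  "concat (map (\<lambda>(B, L). map (\<lambda>(K, l). (K * tensor2 (1\<^sub>m 2) B, l)) L) (zip As Ls)) = local_round bob_op As Ls"
  by (simp_all add: local_round_def)

lemma locc_tree_alice_round:
  "\<lbrakk> \<forall>A \<in> set As. A \<in> carrier_mat 2 2; msum 2 (map (\<lambda>A. mat_adjoint A * A) As) = 1\<^sub>m 2;
     length Ls = length As; \<forall>L \<in> set Ls. locc_tree L \<rbrakk> \<Longrightarrow> locc_tree (local_round alice_op As Ls)"
  unfolding locc_rule_rounds(1)[symmetric] by (rule locc_tree.alice)

lemma locc_tree_bob_round: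
  "\<lbrakk> \<forall>B \<in> set Bs. B \<in> carrier_mat 2 2; msum 2 (map (\<lambda>B. mat_adjoint B * B) Bs) = 1\<^sub>m 2;
     length Ls = length Bs; \<forall>L \<in> set Ls. locc_tree L \<rbrakk> \<Longrightarrow> locc_tree (local_round bob_op Bs Ls)"
  unfolding locc_rule_rounds(2)[symmetric] by (rule locc_tree.bob)

lemma local_round_memE:
  assumes "(K, l) \<in> set (local_round T As Ls)"
  obtains A L K' where "A \<in> set As" "L \<in> set Ls" "(K', l) \<in> set L" "K = K' * T A"
  using assms unfolding local_round_def by (auto dest: set_zip_leftD set_zip_rightD)

lemma local_round_kraus_sum:
  assumes "length As = length Ls"
    and "\<forall>L\<in>set Ls. (\<forall>(K, l)\<in>set L. K \<in> carrier_mat 4 4) \<and> msum 4 (map kraus_square L) = 1\<^sub>m 4"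
    and "\<forall>A\<in>set As. T A \<in> carrier_mat 4 4"
  shows "msum 4 (map kraus_square (local_round T As Ls)) = msum 4 (map (\<lambda>A. mat_adjoint (T A) * T A) As)"
  using assms
proof (induction As Ls rule: list_induct2)
  case (Cons A As L Ls)
  have TA: "T A \<in> carrier_mat 4 4" and LK: "\<forall>(K, l)\<in>set L. K \<in> carrier_mat 4 4"
    and L1: "msum 4 (map kraus_square L) = 1\<^sub>m 4" using Cons.prems by auto
  let ?branch = "map (\<lambda>(K, l). (K * T A, l)) L"
  have "map kraus_square ?branch = map (\<lambda>x. mat_adjoint (T A) * kraus_square x * T A) L"
    using LK TA by (auto simp: kraus_square_def adjoint_square_mult)
  then have "msum 4 (map kraus_square ?branch) = msum 4 (map (\<lambda>x. mat_adjoint (T A) * kraus_square x * T A) L)"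
    by (simp only:)
  also have "\<dots> = mat_adjoint (T A) * msum 4 (map kraus_square L) * T A"
    by (rule msum_conjugate[OF TA]) (use LK in \<open>auto simp: kraus_square_def\<close>)
  finally have branch: "msum 4 (map kraus_square ?branch) = mat_adjoint (T A) * T A"
    using L1 TA by simp
  have rest: "\<forall>x\<in>set (map kraus_square (local_round T As Ls)). x \<in> carrier_mat 4 4"
  proof
    fix x assume "x \<in> set (map kraus_square (local_round T As Ls))"
    then obtain K l where x: "x = kraus_square (K, l)" and mem: "(K, l) \<in> set (local_round T As Ls)"
      by auto
    from mem obtain A' L' K' where "A' \<in> set As" "L' \<in> set Ls" "(K', l) \<in> set L'" "K = K' * T A'"
      by (rule local_round_memE)
    then show "x \<in> carrier_mat 4 4"
      using Cons.prems x by (fastforce simp: kraus_square_def)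
  qed
  have first: "\<forall>x\<in>set (map kraus_square ?branch). x \<in> carrier_mat 4 4"
    using LK TA by (auto simp: kraus_square_def)
  have "local_round T (A # As) (L # Ls) = ?branch @ local_round T As Ls"
    by (simp add: local_round_def)
  then have "msum 4 (map kraus_square (local_round T (A # As) (L # Ls)))
      = msum 4 (map kraus_square ?branch) + msum 4 (map kraus_square (local_round T As Ls))"
    by (simp only: map_append msum_append[OF first rest])
  then show ?case
    using Cons.IH Cons.prems branch by simp
qed (simp add: local_round_def)

lemma local_measurement_complete:
  assumes "\<forall>A\<in>set As. A \<in> carrier_mat 2 2" "msum 2 (map (\<lambda>A. mat_adjoint A * A) As) = 1\<^sub>m 2"
  shows "msum 4 (map (\<lambda>A. mat_adjoint (alice_op A) * alice_op A) As) = 1\<^sub>m 4"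
    and "msum 4 (map (\<lambda>A. mat_adjoint (bob_op A) * bob_op A) As) = 1\<^sub>m 4"
proof -
  have sq: "\<forall>A\<in>set As. mat_adjoint A * A \<in> carrier_mat 2 2"
    using assms(1) by auto
  have "map (\<lambda>A. mat_adjoint (alice_op A) * alice_op A) As = map (\<lambda>A. tensor2 (mat_adjoint A * A) (1\<^sub>m 2)) As"
    using assms(1) by (auto simp: tensor2_adjoint_square)
  then have "msum 4 (map (\<lambda>A. mat_adjoint (alice_op A) * alice_op A) As)
      = tensor2 (msum 2 (map (\<lambda>A. mat_adjoint A * A) As)) (1\<^sub>m 2)"
    by (simp only: msum_tensor_left[OF sq])
  then show "msum 4 (map (\<lambda>A. mat_adjoint (alice_op A) * alice_op A) As) = 1\<^sub>m 4"
    using assms(2) by (simp only: tensor2_one)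
  have "map (\<lambda>A. mat_adjoint (bob_op A) * bob_op A) As = map (\<lambda>A. tensor2 (1\<^sub>m 2) (mat_adjoint A * A)) As"
    using assms(1) by (auto simp: tensor2_adjoint_square)
  then have "msum 4 (map (\<lambda>A. mat_adjoint (bob_op A) * bob_op A) As)
      = tensor2 (1\<^sub>m 2) (msum 2 (map (\<lambda>A. mat_adjoint A * A) As))"
    by (simp only: msum_tensor_right[OF sq])
  then show "msum 4 (map (\<lambda>A. mat_adjoint (bob_op A) * bob_op A) As) = 1\<^sub>m 4"
    using assms(2) by (simp only: tensor2_one)
qed

definition product_op :: "complex mat \<Rightarrow> bool" where
  "product_op K \<longleftrightarrow> (\<exists>X Y. X \<in> carrier_mat 2 2 \<and> Y \<in> carrier_mat 2 2 \<and> K = tensor2 X Y)"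

lemma product_op_carrier: "product_op K \<Longrightarrow> K \<in> carrier_mat 4 4"
  unfolding product_op_def by auto

lemma product_op_mult:
  assumes "product_op K" "product_op T"
  shows "product_op (K * T)"
proof -
  obtain X Y X' Y' where c: "X \<in> carrier_mat 2 2" "Y \<in> carrier_mat 2 2" "X' \<in> carrier_mat 2 2"
    "Y' \<in> carrier_mat 2 2" and KT: "K = tensor2 X Y" "T = tensor2 X' Y'"
    using assms unfolding product_op_def by blast
  have "X * X' \<in> carrier_mat 2 2" "Y * Y' \<in> carrier_mat 2 2" using c by auto
  moreover have "K * T = tensor2 (X * X') (Y * Y')"
    unfolding KT using c by (rule tensor2_mult)
  ultimately show ?thesis unfolding product_op_def by blast
qed

lemma product_op_local:
  "A \<in> carrier_mat 2 2 \<Longrightarrow> product_op (alice_op A)"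
  "A \<in> carrier_mat 2 2 \<Longrightarrow> product_op (bob_op A)"
  unfolding product_op_def using one_carrier_mat by blast+

lemma local_round_product:
  assumes "\<forall>A\<in>set As. product_op (T A)" "\<forall>L\<in>set Ls. \<forall>(K, l)\<in>set L. product_op K"
  shows "\<forall>(K, l)\<in>set (local_round T As Ls). product_op K"
proof clarify
  fix K l assume "(K, l) \<in> set (local_round T As Ls)"
  then obtain A L K' where "A \<in> set As" "L \<in> set Ls" "(K', l) \<in> set L" "K = K' * T A"
    by (rule local_round_memE)
  then show "product_op K" using assms by (fastforce intro: product_op_mult)
qed

lemma locc_tree_product: "locc_tree L \<Longrightarrow> \<forall>(K, l)\<in>set L. product_op K"
proof (induction rule: locc_tree.induct)
  case (stop l)
  show ?case using product_op_local(1)[of "1\<^sub>m 2"] by (simp add: tensor2_one)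
next
  case (alice As Ls)
  have "\<forall>A\<in>set As. product_op (alice_op A)" using alice(1) by (simp add: product_op_local)
  then show ?case unfolding locc_rule_rounds using alice(4) by (intro local_round_product) auto
next
  case (bob Bs Ls)
  have "\<forall>B\<in>set Bs. product_op (bob_op B)" using bob(1) by (simp add: product_op_local)
  then show ?case unfolding locc_rule_rounds using bob(4) by (intro local_round_product) auto
qed

lemma locc_tree_carrier:
  assumes "locc_tree L" "(K, l) \<in> set L"
  shows "K \<in> carrier_mat 4 4"
proof -
  have "product_op K" using locc_tree_product[OF assms(1)] assms(2) by auto
  then show ?thesis by (rule product_op_carrier)
qed

lemma complete_subtrees:
  assumes "\<forall>L\<in>set Ls. locc_tree L \<and> msum 4 (map kraus_square L) = 1\<^sub>m 4"
  shows "\<forall>L\<in>set Ls. (\<forall>(K, l)\<in>set L. K \<in> carrier_mat 4 4) \<and> msum 4 (map kraus_square L) = 1\<^sub>m 4"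
proof
  fix L assume "L \<in> set Ls"
  then have "locc_tree L" "msum 4 (map kraus_square L) = 1\<^sub>m 4" using assms by auto
  then show "(\<forall>(K, l)\<in>set L. K \<in> carrier_mat 4 4) \<and> msum 4 (map kraus_square L) = 1\<^sub>m 4"
    by (auto intro: locc_tree_carrier)
qed

lemma locc_tree_complete: "locc_tree L \<Longrightarrow> msum 4 (map kraus_square L) = 1\<^sub>m 4"
proof (induction rule: locc_tree.induct)
  case (stop l)
  then show ?case by (simp add: kraus_square_def)
next
  case (alice As Ls)
  have "\<forall>L\<in>set Ls. (\<forall>(K, l)\<in>set L. K \<in> carrier_mat 4 4) \<and> msum 4 (map kraus_square L) = 1\<^sub>m 4"
    using alice(4) by (rule complete_subtrees)
  then have "msum 4 (map kraus_square (local_round alice_op As Ls))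
      = msum 4 (map (\<lambda>A. mat_adjoint (alice_op A) * alice_op A) As)"
    using alice(3) by (intro local_round_kraus_sum) auto
  then show ?case unfolding locc_rule_rounds
    using local_measurement_complete(1)[OF alice(1,2)] by (simp only:)
next
  case (bob Bs Ls)
  have "\<forall>L\<in>set Ls. (\<forall>(K, l)\<in>set L. K \<in> carrier_mat 4 4) \<and> msum 4 (map kraus_square L) = 1\<^sub>m 4"
    using bob(4) by (rule complete_subtrees)
  then have "msum 4 (map kraus_square (local_round bob_op Bs Ls))
      = msum 4 (map (\<lambda>B. mat_adjoint (bob_op B) * bob_op B) Bs)"
    using bob(3) by (intro local_round_kraus_sum) auto
  then show ?case unfolding locc_rule_rounds
    using local_measurement_complete(2)[OF bob(1,2)] by (simp only:)
qed

section \<open>LOCC discrimination implies separable discrimination\<close>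

lemma cnj_mult_self_nonneg: "0 \<le> cnj u * (u::complex)"
  using complex_mult_cnj[of u] by (simp add: mult.commute less_eq_complex_def)

text \<open>X^H X is positive semidefinite: its quadratic form is the squared norm of X v.\<close>

lemma psd_adjoint_square:
  assumes X: "X \<in> carrier_mat 2 2"
  shows "psd 2 (mat_adjoint X * X)"
  unfolding psd_def
proof (intro conjI ballI)
  show "mat_adjoint X * X \<in> carrier_mat 2 2" using X by auto
  fix v :: "complex vec" assume v: "v \<in> carrier_vec 2"
  have "conjugate v \<bullet> ((mat_adjoint X * X) *\<^sub>v v)
    = cnj (X$$(0,0) * v$0 + X$$(0,1) * v$1) * (X$$(0,0) * v$0 + X$$(0,1) * v$1)
    + cnj (X$$(1,0) * v$0 + X$$(1,1) * v$1) * (X$$(1,0) * v$0 + X$$(1,1) * v$1)"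
    using X v by (simp add: scalar_prod_def mult_mat_vec_def index_mult_mat sum_atLeast0_2 algebra_simps)
  also have "0 \<le> \<dots>" by (intro add_nonneg_nonneg cnj_mult_self_nonneg)
  finally show "0 \<le> conjugate v \<bullet> ((mat_adjoint X * X) *\<^sub>v v)" .
qed

lemma product_kraus_squares_separable:
  "\<forall>(K, l)\<in>set xs. product_op K \<Longrightarrow> separable_op (msum 4 (map kraus_square xs))"
proof (induction xs)
  case Nil
  show ?case unfolding separable_op_def by (intro exI[of _ "[]"]) simp
next
  case (Cons x xs)
  obtain K l where x: "x = (K, l)" by (cases x)
  obtain X Y where XY: "X \<in> carrier_mat 2 2" "Y \<in> carrier_mat 2 2" "K = tensor2 X Y"
    using Cons.prems x unfolding product_op_def by auto
  have sq: "kraus_square x = tensor2 (mat_adjoint X * X) (mat_adjoint Y * Y)"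
    using XY x by (simp add: kraus_square_def tensor2_adjoint_square)
  obtain cs where cs: "\<forall>(c, A, B)\<in>set cs. 0 \<le> c \<and> psd 2 A \<and> psd 2 B"
    "msum 4 (map kraus_square xs) = msum 4 (map (\<lambda>(c, A, B). complex_of_real c \<cdot>\<^sub>m tensor2 A B) cs)"
    using Cons unfolding separable_op_def by auto
  have "(1::complex) \<cdot>\<^sub>m tensor2 (mat_adjoint X * X) (mat_adjoint Y * Y)
      = tensor2 (mat_adjoint X * X) (mat_adjoint Y * Y)"
    by (rule eq_matI) auto
  then show ?case unfolding separable_op_def
    using cs sq psd_adjoint_square[OF XY(1)] psd_adjoint_square[OF XY(2)]
    by (intro exI[of _ "(1, mat_adjoint X * X, mat_adjoint Y * Y) # cs"]) simp
qed

lemma povm_elem_carrier: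
  "\<forall>(K, l)\<in>set L. K \<in> carrier_mat 4 4 \<Longrightarrow> povm_elem L i \<in> carrier_mat 4 4"
  unfolding povm_elem_kraus_square by (rule msum_carrier) (auto simp: kraus_square_def)

lemma povm_elems_sum:
  assumes L: "\<forall>(K, l)\<in>set L. K \<in> carrier_mat 4 4"
  shows "msum 4 (map (povm_elem L) [0..<n]) = msum 4 (map kraus_square (filter (\<lambda>(K, l). l < n) L))"
proof (induction n)
  case 0
  have "filter (\<lambda>(K, l). l < 0) L = []" by (auto simp: filter_empty_conv)
  then show ?case by simp
next
  case (Suc n)
  let ?below = "\<lambda>m. filter (\<lambda>(K, l). l < m) L"
  have sq: "\<forall>x\<in>set L. kraus_square x \<in> carrier_mat 4 4"
    using L by (auto simp: kraus_square_def)
  have P: "\<forall>x\<in>set (map (povm_elem L) [0..<n]). x \<in> carrier_mat 4 4" "povm_elem L n \<in> carrier_mat 4 4"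
    using povm_elem_carrier[OF L] by auto
  have "msum 4 (map (povm_elem L) [0..<Suc n]) = msum 4 (map (povm_elem L) [0..<n]) + povm_elem L n"
    using P msum_append[of "map (povm_elem L) [0..<n]" 4 "[povm_elem L n]"] by simp
  also have "\<dots> = msum 4 (map kraus_square (?below n)) + povm_elem L n"
    using Suc.IH by simp
  also have "\<dots> = msum 4 (map kraus_square (filter (\<lambda>x. (\<lambda>(K, l). l < n) x) (?below (Suc n))))
      + msum 4 (map kraus_square (filter (\<lambda>x. \<not> (\<lambda>(K, l). l < n) x) (?below (Suc n))))"
  proof -
    have "filter (\<lambda>x. (\<lambda>(K, l). l < n) x) (?below (Suc n)) = ?below n"
      by (auto simp: filter_filter intro: filter_cong)
    moreover have "filter (\<lambda>x. \<not> (\<lambda>(K, l). l < n) x) (?below (Suc n)) = filter (\<lambda>(K, l). l = n) L"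
      by (auto simp: filter_filter intro: filter_cong)
    ultimately show ?thesis by (simp add: povm_elem_kraus_square)
  qed
  also have "\<dots> = msum 4 (map kraus_square (?below (Suc n)))"
    by (rule msum_filter_split[symmetric]) (use sq in auto)
  finally show ?case .
qed

theorem locc_implies_sep_distinguishable:
  assumes "locc_distinguishable \<rho>s"
  shows "sep_distinguishable \<rho>s"
proof -
  obtain L where tree: "locc_tree L" and labels: "\<forall>(K, l) \<in> set L. l < length \<rho>s"
    and tr: "\<forall>i < length \<rho>s. \<forall>j < length \<rho>s. mtrace (povm_elem L i * \<rho>s ! j) = (if i = j then 1 else 0)"
    using assms unfolding locc_distinguishable_def by blast
  have product: "\<forall>(K, l)\<in>set L. product_op K" by (rule locc_tree_product[OF tree])
  have "\<forall>i. separable_op (povm_elem L i)"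
    unfolding povm_elem_kraus_square using product by (auto intro!: product_kraus_squares_separable)
  moreover have "filter (\<lambda>(K, l). l < length \<rho>s) L = L"
    using labels by (auto simp: filter_id_conv)
  then have "msum 4 (map (povm_elem L) [0..<length \<rho>s]) = 1\<^sub>m 4"
    using povm_elems_sum[of L "length \<rho>s"] locc_tree_complete[OF tree] locc_tree_carrier[OF tree] by auto
  ultimately show ?thesis
    unfolding sep_distinguishable_def using tr by blast
qed

lemma psd_quadratic_form:
  assumes "psd 2 A"
  shows "0 \<le> cnj x * (A$$(0,0) * x + A$$(0,1) * y) + cnj y * (A$$(1,0) * x + A$$(1,1) * y)"
proof -
  let ?v = "vec 2 (\<lambda>i. if i = 0 then x else y)"
  have A: "A \<in> carrier_mat 2 2" and "0 \<le> conjugate ?v \<bullet> (A *\<^sub>v ?v)"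
    using assms unfolding psd_def by auto
  then show ?thesis
    by (simp add: scalar_prod_def mult_mat_vec_def sum_atLeast0_2 atLeast0LessThan[symmetric])
qed

lemma psd2_entries:
  assumes "psd 2 A"
  obtains p q z where "0 \<le> p" "0 \<le> q" "A$$(0,0) = of_real p" "A$$(1,1) = of_real q"
    "A$$(0,1) = z" "A$$(1,0) = cnj z" "(cmod z)\<^sup>2 \<le> p * q"
proof -
  note form = psd_quadratic_form[OF assms]
  define p q z where "p = Re (A$$(0,0))" and "q = Re (A$$(1,1))" and "z = A$$(0,1)"
  have d0: "0 \<le> A$$(0,0)" and d1: "0 \<le> A$$(1,1)"
    using form[of 1 0] form[of 0 1] by simp_all
  then have A00: "A$$(0,0) = of_real p" and A11: "A$$(1,1) = of_real q" and pq: "0 \<le> p" "0 \<le> q"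
    by (auto simp: p_def q_def complex_eq_iff less_eq_complex_def)
  have "0 \<le> A$$(0,0) + A$$(0,1) + (A$$(1,0) + A$$(1,1))"
    and "0 \<le> A$$(0,0) + A$$(0,1) * \<i> + (- \<i>) * (A$$(1,0) + A$$(1,1) * \<i>)"
    using form[of 1 1] form[of 1 \<i>] by simp_all
  then have A10: "A$$(1,0) = cnj z"
    using d0 d1 by (auto simp: z_def less_eq_complex_def complex_eq_iff algebra_simps)
  have real_form: "0 \<le> p * (Re x ^ 2 + Im x ^ 2) + 2 * Re (cnj x * z * y) + q * (Re y ^ 2 + Im y ^ 2)" for x y
  proof -
    have "0 \<le> Re (cnj x * (of_real p * x + z * y) + cnj y * (cnj z * x + of_real q * y))"
      using form[of x y] unfolding A00 A11 A10 z_def by (simp add: less_eq_complex_def)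
    then show ?thesis by (simp add: algebra_simps power2_eq_square)
  qed
  have nz: "(cmod z)\<^sup>2 = Re z ^ 2 + Im z ^ 2" by (simp add: cmod_power2)
  have "0 \<le> q * (p * q - (cmod z)\<^sup>2)"
    using real_form[of "of_real q" "- cnj z"] nz by (simp add: algebra_simps power2_eq_square)
  moreover have "0 \<le> p * (p * q - (cmod z)\<^sup>2)"
    using real_form[of "- z" "of_real p"] nz by (simp add: algebra_simps power2_eq_square)
  moreover have "z = 0" if "p = 0" "q = 0"
  proof -
    have "0 \<le> - 2 * (Re z ^ 2 + Im z ^ 2)"
      using real_form[of 1 "- cnj z"] that by (simp add: algebra_simps power2_eq_square)
    then have "Re z ^ 2 + Im z ^ 2 \<le> 0" by simp
    then show "z = 0" by (simp add: sum_power2_le_zero_iff complex_eq_iff)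
  qed
  ultimately have "(cmod z)\<^sup>2 \<le> p * q"
    using pq by (cases "p = 0 \<and> q = 0") (auto simp: zero_le_mult_iff)
  then show ?thesis using that pq A00 A11 A10 z_def by blast
qed

section \<open>Product operators against sigma1 and sigma2\<close>

lemma am_gm_cross_term:
  fixes p q r s t :: real
  assumes "0 \<le> p" "0 \<le> q" "0 \<le> r" "0 \<le> s" "t\<^sup>2 \<le> p * q * (r * s)"
  shows "2 * \<bar>t\<bar> \<le> p * r + q * s"
proof (rule power2_le_imp_le)
  have "(2 * \<bar>t\<bar>)\<^sup>2 \<le> 4 * (p * r) * (q * s)"
    using assms(5) by (simp add: power2_eq_square algebra_simps)
  also have "\<dots> \<le> (p * r + q * s)\<^sup>2"
    using zero_le_power2[of "p * r - q * s"] by (simp add: power2_eq_square algebra_simps)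
  finally show "(2 * \<bar>t\<bar>)\<^sup>2 \<le> (p * r + q * s)\<^sup>2" .
  show "0 \<le> p * r + q * s" using assms by simp
qed

text \<open>The real shape of tr((A (x) B) sigma) for sigma1 (e = p s) and sigma2 (e = q r):
  it is nonnegative, and it vanishes only if the |00>-entry p r of A (x) B vanishes.\<close>

lemma weighted_overlap:
  fixes p q r s t a e :: real
  assumes nonneg: "0 \<le> p" "0 \<le> q" "0 \<le> r" "0 \<le> s" and bound: "t\<^sup>2 \<le> p * q * (r * s)"
    and a: "0 < a" "a < 1" and e: "e = p * s \<or> e = q * r"
  shows "0 \<le> a / 2 * (p * r + q * s + 2 * t) + (1 - a) * e"
    and "a / 2 * (p * r + q * s + 2 * t) + (1 - a) * e = 0 \<Longrightarrow> p * r = 0"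
proof -
  have "2 * \<bar>t\<bar> \<le> p * r + q * s" using am_gm_cross_term[OF nonneg bound] .
  then have first: "0 \<le> a / 2 * (p * r + q * s + 2 * t)" using a by simp
  have second: "0 \<le> (1 - a) * e" using e nonneg a by auto
  show "0 \<le> a / 2 * (p * r + q * s + 2 * t) + (1 - a) * e" using first second by linarith
  assume "a / 2 * (p * r + q * s + 2 * t) + (1 - a) * e = 0"
  then have sum0: "p * r + q * s + 2 * t = 0" and e0: "e = 0"
    using first second a by (auto simp: add_nonneg_eq_0_iff)
  have t0: "t = 0" if "p * q * (r * s) = 0"
    using bound that by simp
  show "p * r = 0"
    using e e0 sum0 t0 nonneg by (auto simp: add_nonneg_eq_0_iff)
qed

lemma re_mult_square_bound: "(Re (z * w))\<^sup>2 \<le> (cmod z)\<^sup>2 * (cmod w)\<^sup>2"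
proof -
  have "\<bar>Re (z * w)\<bar> \<le> cmod z * cmod w"
    using abs_Re_le_cmod[of "z * w"] by (simp add: norm_mult)
  then have "\<bar>Re (z * w)\<bar>\<^sup>2 \<le> (cmod z * cmod w)\<^sup>2"
    by (rule power_mono) simp
  then show ?thesis by (simp add: power_mult_distrib)
qed

lemma sqrt2_square [simp]: "complex_of_real (sqrt 2) * complex_of_real (sqrt 2) = 2"
proof -
  have "complex_of_real (sqrt 2) * complex_of_real (sqrt 2) = complex_of_real (sqrt 2 * sqrt 2)"
    by (simp only: of_real_mult)
  then show ?thesis by simp
qed

lemma sqrt2_inverse_square: "complex_of_real (1 / sqrt 2) * complex_of_real (1 / sqrt 2) = 1 / 2"
  by (simp add: of_real_divide)

lemma sigma1_index:
  "i < 4 \<Longrightarrow> j < 4 \<Longrightarrow> sigma1 a $$ (i, j) =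
    (if (i = 0 \<or> i = 3) \<and> (j = 0 \<or> j = 3) then of_real a / 2
     else if i = 1 \<and> j = 1 then of_real (1 - a) else 0)"
  unfolding less_4_cases by (auto simp: sigma1_def proj_def phi_plus_def ket_def sqrt2_inverse_square)

lemma sigma2_index:
  "i < 4 \<Longrightarrow> j < 4 \<Longrightarrow> sigma2 a $$ (i, j) =
    (if (i = 0 \<or> i = 3) \<and> (j = 0 \<or> j = 3) then (if i = j then of_real a / 2 else - of_real a / 2)
     else if i = 2 \<and> j = 2 then of_real (1 - a) else 0)"
  unfolding less_4_cases by (auto simp: sigma2_def proj_def phi_minus_def ket_def sqrt2_inverse_square)

lemma sigma_carrier [simp]: "sigma1 a \<in> carrier_mat 4 4" "sigma2 a \<in> carrier_mat 4 4"
  by (simp_all add: sigma1_def sigma2_def proj_def)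

lemma trace_tensor_sigma1:
  assumes "A \<in> carrier_mat 2 2" "B \<in> carrier_mat 2 2"
  shows "mtrace (tensor2 A B * sigma1 a)
    = of_real a / 2 * (A$$(0,0) * B$$(0,0) + A$$(0,1) * B$$(0,1) + A$$(1,0) * B$$(1,0) + A$$(1,1) * B$$(1,1))
      + of_real (1 - a) * (A$$(0,0) * B$$(1,1))"
proof -
  have "mtrace (tensor2 A B * sigma1 a) = (\<Sum>i<4. \<Sum>k<4. tensor2 A B $$ (i,k) * sigma1 a $$ (k,i))"
    by (rule mtrace_mult_4) auto
  also have "\<dots> = (\<Sum>i<4. \<Sum>k<4. (A $$ (i div 2, k div 2) * B $$ (i mod 2, k mod 2)) *
     (if (k = 0 \<or> k = 3) \<and> (i = 0 \<or> i = 3) then of_real a / 2 else if k = 1 \<and> i = 1 then of_real (1 - a) else 0))"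
    by (intro sum.cong refl) (simp add: tensor2_index sigma1_index)
  also have "\<dots> = of_real a / 2 * (A$$(0,0) * B$$(0,0) + A$$(0,1) * B$$(0,1) + A$$(1,0) * B$$(1,0) + A$$(1,1) * B$$(1,1))
      + of_real (1 - a) * (A$$(0,0) * B$$(1,1))"
    by (simp add: sum_lessThan_4 ring_distribs mult_ac)
  finally show ?thesis .
qed

lemma trace_tensor_sigma2:
  assumes "A \<in> carrier_mat 2 2" "B \<in> carrier_mat 2 2"
  shows "mtrace (tensor2 A B * sigma2 a)
    = of_real a / 2 * (A$$(0,0) * B$$(0,0) - A$$(0,1) * B$$(0,1) - A$$(1,0) * B$$(1,0) + A$$(1,1) * B$$(1,1))
      + of_real (1 - a) * (A$$(1,1) * B$$(0,0))"
proof -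
  have "mtrace (tensor2 A B * sigma2 a) = (\<Sum>i<4. \<Sum>k<4. tensor2 A B $$ (i,k) * sigma2 a $$ (k,i))"
    by (rule mtrace_mult_4) auto
  also have "\<dots> = (\<Sum>i<4. \<Sum>k<4. (A $$ (i div 2, k div 2) * B $$ (i mod 2, k mod 2)) *
     (if (k = 0 \<or> k = 3) \<and> (i = 0 \<or> i = 3) then (if k = i then of_real a / 2 else - of_real a / 2)
      else if k = 2 \<and> i = 2 then of_real (1 - a) else 0))"
    by (intro sum.cong refl) (simp add: tensor2_index sigma2_index)
  also have "\<dots> = of_real a / 2 * (A$$(0,0) * B$$(0,0) - A$$(0,1) * B$$(0,1) - A$$(1,0) * B$$(1,0) + A$$(1,1) * B$$(1,1))
      + of_real (1 - a) * (A$$(1,1) * B$$(0,0))"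
    by (simp add: sum_lessThan_4 ring_distribs mult_ac)
  finally show ?thesis .
qed

lemma cnj_product_sum: "z * w + cnj z * cnj w = complex_of_real (2 * Re (z * w))"
  using complex_add_cnj[of "z * w"] by simp

definition detects_ket00 :: "complex mat \<Rightarrow> bool" where
  "detects_ket00 S \<longleftrightarrow> S \<in> carrier_mat 4 4 \<and> (\<forall>A B. psd 2 A \<longrightarrow> psd 2 B \<longrightarrow>
     0 \<le> mtrace (tensor2 A B * S) \<and> (mtrace (tensor2 A B * S) = 0 \<longrightarrow> A$$(0,0) * B$$(0,0) = 0))"

lemma sigma1_detects_ket00:
  assumes "0 < a" "a < 1"
  shows "detects_ket00 (sigma1 a)"
  unfolding detects_ket00_def
proof (intro conjI allI impI)
  fix A B assume "psd 2 A" "psd 2 B"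
  obtain p q z where A: "0 \<le> p" "0 \<le> q" "A$$(0,0) = of_real p" "A$$(1,1) = of_real q"
    "A$$(0,1) = z" "A$$(1,0) = cnj z" "(cmod z)\<^sup>2 \<le> p * q"
    using psd2_entries[OF \<open>psd 2 A\<close>] by blast
  obtain r s w where B: "0 \<le> r" "0 \<le> s" "B$$(0,0) = of_real r" "B$$(1,1) = of_real s"
    "B$$(0,1) = w" "B$$(1,0) = cnj w" "(cmod w)\<^sup>2 \<le> r * s"
    using psd2_entries[OF \<open>psd 2 B\<close>] by blast
  define t where "t = Re (z * w)"
  have bound: "t\<^sup>2 \<le> p * q * (r * s)"
    unfolding t_def using re_mult_square_bound[of z w] mult_mono[OF A(7) B(7)] A B by (auto intro: order_trans)
  have AB: "A \<in> carrier_mat 2 2" "B \<in> carrier_mat 2 2"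
    using \<open>psd 2 A\<close> \<open>psd 2 B\<close> by (simp_all add: psd_def)
  have cross: "of_real p * of_real r + z * w + cnj z * cnj w + of_real q * of_real s
      = complex_of_real (p * r + q * s + 2 * t)"
    using cnj_product_sum[of z w, folded t_def] by (simp add: algebra_simps)
  define g where "g = a / 2 * (p * r + q * s + 2 * t) + (1 - a) * (p * s)"
  have tr: "mtrace (tensor2 A B * sigma1 a) = of_real g"
    unfolding trace_tensor_sigma1[OF AB] A(3-6) B(3-6) cross g_def by (simp add: algebra_simps)
  note overlap = weighted_overlap[OF A(1,2) B(1,2) bound assms disjI1[OF refl], folded g_def]
  show "0 \<le> mtrace (tensor2 A B * sigma1 a)"
    unfolding tr using overlap(1) by (simp add: less_eq_complex_def)
  show "A$$(0,0) * B$$(0,0) = 0" if "mtrace (tensor2 A B * sigma1 a) = 0"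
    using that overlap(2) unfolding tr A(3) B(3) by simp
qed simp

lemma sigma2_detects_ket00:
  assumes "0 < a" "a < 1"
  shows "detects_ket00 (sigma2 a)"
  unfolding detects_ket00_def
proof (intro conjI allI impI)
  fix A B assume "psd 2 A" "psd 2 B"
  obtain p q z where A: "0 \<le> p" "0 \<le> q" "A$$(0,0) = of_real p" "A$$(1,1) = of_real q"
    "A$$(0,1) = z" "A$$(1,0) = cnj z" "(cmod z)\<^sup>2 \<le> p * q"
    using psd2_entries[OF \<open>psd 2 A\<close>] by blast
  obtain r s w where B: "0 \<le> r" "0 \<le> s" "B$$(0,0) = of_real r" "B$$(1,1) = of_real s"
    "B$$(0,1) = w" "B$$(1,0) = cnj w" "(cmod w)\<^sup>2 \<le> r * s"
    using psd2_entries[OF \<open>psd 2 B\<close>] by blast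
  define t where "t = Re (z * w)"
  have "t\<^sup>2 \<le> p * q * (r * s)"
    unfolding t_def using re_mult_square_bound[of z w] mult_mono[OF A(7) B(7)] A B by (auto intro: order_trans)
  then have bound: "(- t)\<^sup>2 \<le> p * q * (r * s)" by simp
  have AB: "A \<in> carrier_mat 2 2" "B \<in> carrier_mat 2 2"
    using \<open>psd 2 A\<close> \<open>psd 2 B\<close> by (simp_all add: psd_def)
  have cross: "of_real p * of_real r - z * w - cnj z * cnj w + of_real q * of_real s
      = complex_of_real (p * r + q * s + 2 * - t)"
    using cnj_product_sum[of z w, folded t_def] by (simp add: algebra_simps)
  define g where "g = a / 2 * (p * r + q * s + 2 * - t) + (1 - a) * (q * r)"
  have tr: "mtrace (tensor2 A B * sigma2 a) = of_real g"
    unfolding trace_tensor_sigma2[OF AB] A(3-6) B(3-6) cross g_def by (simp add: algebra_simps)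
  note overlap = weighted_overlap[OF A(1,2) B(1,2) bound assms disjI2[OF refl], folded g_def]
  show "0 \<le> mtrace (tensor2 A B * sigma2 a)"
    unfolding tr using overlap(1) by (simp add: less_eq_complex_def)
  show "A$$(0,0) * B$$(0,0) = 0" if "mtrace (tensor2 A B * sigma2 a) = 0"
    using that overlap(2) unfolding tr A(3) B(3) by simp
qed simp

section \<open>sigma1 and sigma2 are not separably distinguishable\<close>

text \<open>A nonnegative combination of products of positive operators has nonnegative overlap
  with a state detecting |00>, and a vanishing overlap forces a vanishing |00>-entry:
  each product term has nonnegative overlap, so all of them vanish.\<close>

lemma product_combination_overlap:
  assumes S: "detects_ket00 S" and cs: "\<forall>(c, A, B)\<in>set cs. 0 \<le> c \<and> psd 2 A \<and> psd 2 B"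
  shows "msum 4 (map (\<lambda>(c, A, B). complex_of_real c \<cdot>\<^sub>m tensor2 A B) cs) \<in> carrier_mat 4 4 \<and>
    0 \<le> mtrace (msum 4 (map (\<lambda>(c, A, B). complex_of_real c \<cdot>\<^sub>m tensor2 A B) cs) * S) \<and>
    (mtrace (msum 4 (map (\<lambda>(c, A, B). complex_of_real c \<cdot>\<^sub>m tensor2 A B) cs) * S) = 0 \<longrightarrow>
     msum 4 (map (\<lambda>(c, A, B). complex_of_real c \<cdot>\<^sub>m tensor2 A B) cs) $$ (0,0) = 0)"
  using cs
proof (induction cs)
  case Nil
  have "S \<in> carrier_mat 4 4" using S by (simp add: detects_ket00_def)
  then show ?case by simp
next
  case (Cons x cs)
  obtain c A B where x: "x = (c, A, B)" by (cases x)
  have h: "0 \<le> c" "psd 2 A" "psd 2 B" using Cons.prems x by auto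
  have SC: "S \<in> carrier_mat 4 4" using S by (simp add: detects_ket00_def)
  let ?Q = "msum 4 (map (\<lambda>(c, A, B). complex_of_real c \<cdot>\<^sub>m tensor2 A B) cs)"
  have Q: "?Q \<in> carrier_mat 4 4" "0 \<le> mtrace (?Q * S)" "mtrace (?Q * S) = 0 \<Longrightarrow> ?Q $$ (0,0) = 0"
    using Cons by auto
  have AB: "0 \<le> mtrace (tensor2 A B * S)" "mtrace (tensor2 A B * S) = 0 \<Longrightarrow> A$$(0,0) * B$$(0,0) = 0"
    using S h unfolding detects_ket00_def by auto
  have "mtrace ((complex_of_real c \<cdot>\<^sub>m tensor2 A B + ?Q) * S)
      = mtrace (complex_of_real c \<cdot>\<^sub>m (tensor2 A B * S) + ?Q * S)"
    using Q SC by (simp add: add_mult_distrib_mat[of _ 4 4 _ _ 4] mult_smult_assoc_mat[of _ 4 4 _ 4])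
  also have "\<dots> = mtrace (complex_of_real c \<cdot>\<^sub>m (tensor2 A B * S)) + mtrace (?Q * S)"
    by (rule mtrace_add[of _ 4]) (use Q SC in auto)
  also have "mtrace (complex_of_real c \<cdot>\<^sub>m (tensor2 A B * S)) = complex_of_real c * mtrace (tensor2 A B * S)"
    by (rule mtrace_smult[of _ 4]) (use SC in auto)
  finally have tr: "mtrace ((complex_of_real c \<cdot>\<^sub>m tensor2 A B + ?Q) * S)
      = complex_of_real c * mtrace (tensor2 A B * S) + mtrace (?Q * S)" .
  have c_term: "0 \<le> complex_of_real c * mtrace (tensor2 A B * S)"
    using h(1) AB(1) by (simp add: less_eq_complex_def)
  have sum: "msum 4 (map (\<lambda>(c, A, B). complex_of_real c \<cdot>\<^sub>m tensor2 A B) (x # cs))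
      = complex_of_real c \<cdot>\<^sub>m tensor2 A B + ?Q"
    using x by simp
  show ?case unfolding sum
  proof (intro conjI impI)
    show "complex_of_real c \<cdot>\<^sub>m tensor2 A B + ?Q \<in> carrier_mat 4 4" using Q by simp
    show "0 \<le> mtrace ((complex_of_real c \<cdot>\<^sub>m tensor2 A B + ?Q) * S)"
      unfolding tr using c_term Q(2) by (rule add_nonneg_nonneg)
    assume "mtrace ((complex_of_real c \<cdot>\<^sub>m tensor2 A B + ?Q) * S) = 0"
    then have "complex_of_real c * mtrace (tensor2 A B * S) = 0" "mtrace (?Q * S) = 0"
      using tr c_term Q(2) by (simp_all add: add_nonneg_eq_0_iff)
    then show "(complex_of_real c \<cdot>\<^sub>m tensor2 A B + ?Q) $$ (0,0) = 0"
      using Q AB(2) by (auto simp: tensor2_index)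
  qed
qed

lemma separable_orthogonal_entry_00:
  assumes S: "detects_ket00 S" and P: "separable_op P" and orth: "mtrace (P * S) = 0"
  shows "P $$ (0,0) = 0"
proof -
  obtain cs where cs: "\<forall>(c, A, B)\<in>set cs. 0 \<le> c \<and> psd 2 A \<and> psd 2 B"
    and P_def: "P = msum 4 (map (\<lambda>(c, A, B). complex_of_real c \<cdot>\<^sub>m tensor2 A B) cs)"
    using P unfolding separable_op_def by blast
  have "mtrace (P * S) = 0 \<longrightarrow> P $$ (0,0) = 0"
    unfolding P_def using product_combination_overlap[OF S cs] by (rule conjunct2[THEN conjunct2])
  then show ?thesis using orth by (rule mp)
qed

lemma separable_op_carrier: "separable_op P \<Longrightarrow> P \<in> carrier_mat 4 4"
  unfolding separable_op_def by (auto intro!: msum_carrier)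

text \<open>Two states that both detect |00> cannot be discriminated by a separable POVM:
  both POVM elements would vanish at |00>, yet they sum to the identity.\<close>

lemma detects_ket00_not_sep_distinguishable:
  assumes "detects_ket00 \<rho>0" "detects_ket00 \<rho>1"
  shows "\<not> sep_distinguishable [\<rho>0, \<rho>1]"
proof
  assume "sep_distinguishable [\<rho>0, \<rho>1]"
  moreover have "length [\<rho>0, \<rho>1] = 2" by simp
  ultimately obtain Pm :: "nat \<Rightarrow> complex mat" where sep: "\<forall>i<2. separable_op (Pm i)"
    and total: "msum 4 (map Pm [0..<2]) = 1\<^sub>m 4"
    and tr: "\<forall>i<2. \<forall>j<2. mtrace (Pm i * [\<rho>0, \<rho>1] ! j) = (if i = j then 1 else 0)"
    unfolding sep_distinguishable_def by metis
  have "Pm 0 $$ (0,0) = 0"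
    using separable_orthogonal_entry_00[OF assms(2)] sep tr[rule_format, of 0 1] by simp
  moreover have "Pm 1 $$ (0,0) = 0"
    using separable_orthogonal_entry_00[OF assms(1)] sep tr[rule_format, of 1 0] by simp
  moreover have "Pm 1 \<in> carrier_mat 4 4"
    using sep separable_op_carrier by simp
  ultimately have "(Pm 0 + Pm 1) $$ (0,0) = 0" by simp
  moreover have "Pm 0 + Pm 1 = 1\<^sub>m 4"
    using total \<open>Pm 1 \<in> carrier_mat 4 4\<close> by (simp add: upt_rec)
  ultimately show False by simp
qed

section \<open>Walgate's protocol for pure states in s1 and s2\<close>

definition qubit_vec :: "complex \<Rightarrow> complex \<Rightarrow> nat \<Rightarrow> complex" where
  "qubit_vec x y i = (if i = 0 then x else y)"

definition qubit_proj :: "complex \<Rightarrow> complex \<Rightarrow> complex mat" where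
  "qubit_proj x y = mat 2 2 (\<lambda>(i, j). qubit_vec x y i * cnj (qubit_vec x y j) / (x * cnj x + y * cnj y))"

lemma qubit_proj_carrier [simp]: "qubit_proj x y \<in> carrier_mat 2 2"
  by (simp add: qubit_proj_def)

lemma qubit_proj_dims [simp]: "dim_row (qubit_proj x y) = 2" "dim_col (qubit_proj x y) = 2"
  by (simp_all add: qubit_proj_def)

lemma qubit_proj_index:
  "i < 2 \<Longrightarrow> j < 2 \<Longrightarrow> qubit_proj x y $$ (i, j) = qubit_vec x y i * cnj (qubit_vec x y j) / (x * cnj x + y * cnj y)"
  by (simp add: qubit_proj_def)

lemma norm_square_nonzero:
  assumes "x \<noteq> 0 \<or> y \<noteq> 0"
  shows "x * cnj x + y * cnj y \<noteq> 0"
proof -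
  have "x * cnj x + y * cnj y = complex_of_real ((cmod x)\<^sup>2 + (cmod y)\<^sup>2)"
    unfolding of_real_add complex_norm_square by simp
  moreover have "(cmod x)\<^sup>2 + (cmod y)\<^sup>2 > 0"
    using assms by (auto simp: add_pos_nonneg add_nonneg_pos)
  ultimately show ?thesis by (metis of_real_eq_0_iff order_less_irrefl)
qed

lemma qubit_proj_idempotent:
  assumes "x \<noteq> 0 \<or> y \<noteq> 0"
  shows "mat_adjoint (qubit_proj x y) * qubit_proj x y = qubit_proj x y"
proof (rule eq_matI)
  fix i j assume "i < dim_row (qubit_proj x y)" "j < dim_col (qubit_proj x y)"
  then have ij: "i < 2" "j < 2" by (auto simp: qubit_proj_def)
  define N where "N = x * cnj x + y * cnj y"
  have N: "N \<noteq> 0" using norm_square_nonzero[OF assms] by (simp add: N_def)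
  have cN: "cnj N = N" by (simp add: N_def mult.commute)
  have "(mat_adjoint (qubit_proj x y) * qubit_proj x y) $$ (i, j)
      = (\<Sum>k<2. cnj (qubit_proj x y $$ (k, i)) * qubit_proj x y $$ (k, j))"
    using ij by (simp add: index_mult_mat scalar_prod_def atLeast0LessThan)
  also have "\<dots> = (\<Sum>k<2. cnj (qubit_vec x y k * cnj (qubit_vec x y i) / N) * (qubit_vec x y k * cnj (qubit_vec x y j) / N))"
    using ij by (intro sum.cong) (auto simp: qubit_proj_index N_def)
  also have "\<dots> = qubit_vec x y i * cnj (qubit_vec x y j) * ((x * cnj x + y * cnj y) / (N * N))"
    using cN by (simp add: eval_nat_numeral qubit_vec_def field_simps; simp add: add_divide_distrib)
  also have "\<dots> = qubit_proj x y $$ (i, j)" using ij N by (simp add: qubit_proj_index N_def[symmetric])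
  finally show "(mat_adjoint (qubit_proj x y) * qubit_proj x y) $$ (i, j) = qubit_proj x y $$ (i, j)" .
qed (auto simp: qubit_proj_def)

lemma qubit_proj_kills:
  assumes "i < 2" "cnj x * c0 + cnj y * c1 = 0"
  shows "qubit_proj x y $$ (i, 0) * c0 + qubit_proj x y $$ (i, 1) * c1 = 0"
proof -
  have "qubit_proj x y $$ (i, 0) * c0 + qubit_proj x y $$ (i, 1) * c1
      = qubit_vec x y i / (x * cnj x + y * cnj y) * (cnj x * c0 + cnj y * c1)"
    using assms(1) by (simp add: qubit_proj_index qubit_vec_def divide_inverse algebra_simps)
  then show ?thesis using assms(2) by simp
qed

text \<open>(x, y) and (-cnj y, cnj x) are orthogonal, so their projectors add up to 1.\<close>

lemma qubit_proj_complement: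
  assumes "x \<noteq> 0 \<or> y \<noteq> 0"
  shows "qubit_proj x y + qubit_proj (- cnj y) (cnj x) = 1\<^sub>m 2"
proof (rule eq_matI)
  fix i j assume "i < dim_row (1\<^sub>m 2 :: complex mat)" "j < dim_col (1\<^sub>m 2 :: complex mat)"
  then have ij: "i < 2" "j < 2" by auto
  define N where "N = x * cnj x + y * cnj y"
  have N: "N \<noteq> 0" using norm_square_nonzero[OF assms] by (simp add: N_def)
  have e: "- cnj y * cnj (- cnj y) + cnj x * cnj (cnj x) = N" by (simp add: algebra_simps N_def)
  have "(qubit_proj x y + qubit_proj (- cnj y) (cnj x)) $$ (i, j)
      = qubit_proj x y $$ (i, j) + qubit_proj (- cnj y) (cnj x) $$ (i, j)"
    using ij by simp
  also have "\<dots> = (qubit_vec x y i * cnj (qubit_vec x y j)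
         + qubit_vec (- cnj y) (cnj x) i * cnj (qubit_vec (- cnj y) (cnj x) j)) / N"
    unfolding qubit_proj_index[OF ij] e N_def[symmetric] by (simp add: add_divide_distrib)
  also have "qubit_vec x y i * cnj (qubit_vec x y j)
      + qubit_vec (- cnj y) (cnj x) i * cnj (qubit_vec (- cnj y) (cnj x) j) = N * 1\<^sub>m 2 $$ (i, j)"
    using ij unfolding less_2_cases by (auto simp: qubit_vec_def N_def algebra_simps)
  finally show "(qubit_proj x y + qubit_proj (- cnj y) (cnj x)) $$ (i, j) = 1\<^sub>m 2 $$ (i, j)"
    using N by simp
qed auto

definition basis_measurement :: "complex \<Rightarrow> complex \<Rightarrow> complex mat list" where
  "basis_measurement x y = [qubit_proj x y, qubit_proj (- cnj y) (cnj x)]"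

lemma basis_measurement_length [simp]: "length (basis_measurement x y) = 2"
  by (simp add: basis_measurement_def)

lemma basis_measurement_complete:
  assumes "x \<noteq> 0 \<or> y \<noteq> 0"
  shows "\<forall>A\<in>set (basis_measurement x y). A \<in> carrier_mat 2 2"
    and "msum 2 (map (\<lambda>A. mat_adjoint A * A) (basis_measurement x y)) = 1\<^sub>m 2"
proof -
  have "- cnj y \<noteq> 0 \<or> cnj x \<noteq> 0" using assms by auto
  then show "msum 2 (map (\<lambda>A. mat_adjoint A * A) (basis_measurement x y)) = 1\<^sub>m 2"
    using qubit_proj_idempotent[OF assms] qubit_proj_complement[OF assms]
    by (simp add: basis_measurement_def qubit_proj_idempotent)
qed (simp add: basis_measurement_def)

text \<open>Component j of Bob's unnormalised state after Alice has projected v onto (a0, a1).\<close>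

definition bob_cond :: "complex \<Rightarrow> complex \<Rightarrow> complex vec \<Rightarrow> nat \<Rightarrow> complex" where
  "bob_cond a0 a1 v j = cnj a0 * v $ j + cnj a1 * v $ (2 + j)"

text \<open>Explicit components (the index 1 may also appear as Suc 0 after simplification).\<close>

lemma bob_cond_components:
  "bob_cond a0 a1 v 0 = cnj a0 * v $ 0 + cnj a1 * v $ 2"
  "bob_cond a0 a1 v 1 = cnj a0 * v $ 1 + cnj a1 * v $ 3"
  "bob_cond a0 a1 v (Suc 0) = cnj a0 * v $ 1 + cnj a1 * v $ 3"
  by (simp_all add: bob_cond_def)

text \<open>The inner product of Bob's conditional states of v1 and v2.\<close>

definition cond_overlap :: "complex \<Rightarrow> complex \<Rightarrow> complex vec \<Rightarrow> complex vec \<Rightarrow> complex" where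
  "cond_overlap a0 a1 v1 v2 =
     cnj (bob_cond a0 a1 v2 0) * bob_cond a0 a1 v1 0 + cnj (bob_cond a0 a1 v2 1) * bob_cond a0 a1 v1 1"

lemma local_product_annihilates:
  assumes v: "v \<in> carrier_vec 4" and B: "B \<in> carrier_mat 2 2"
    and kill: "\<And>i. i < 2 \<Longrightarrow> B$$(i, 0) * bob_cond a0 a1 v 0 + B$$(i, 1) * bob_cond a0 a1 v 1 = 0"
  shows "tensor2 (qubit_proj a0 a1) B *\<^sub>v v = 0\<^sub>v 4"
proof (rule eq_vecI)
  fix i assume "i < dim_vec (0\<^sub>v 4 :: complex vec)"
  then have i: "i < 4" by simp
  have "(tensor2 (qubit_proj a0 a1) B *\<^sub>v v) $ i = qubit_vec a0 a1 (i div 2) / (a0 * cnj a0 + a1 * cnj a1) *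
      (B$$(i mod 2, 0) * bob_cond a0 a1 v 0 + B$$(i mod 2, 1) * bob_cond a0 a1 v 1)"
    using i v B unfolding less_4_cases
    by (auto simp: mult_mat_vec_def scalar_prod_def sum_atLeast0_4 tensor2_index qubit_proj_index
        qubit_vec_def bob_cond_components
        divide_inverse algebra_simps)
  also have "\<dots> = 0" using kill[of "i mod 2"] by simp
  finally show "(tensor2 (qubit_proj a0 a1) B *\<^sub>v v) $ i = 0\<^sub>v 4 $ i" using i by simp
qed (use v in auto)

lemma cond_overlap_complement:
  "cond_overlap a0 a1 v1 v2 + cond_overlap (- cnj a1) (cnj a0) v1 v2
    = (a0 * cnj a0 + a1 * cnj a1) * (\<Sum>i<4. cnj (v2 $ i) * v1 $ i)"
  by (simp add: cond_overlap_def bob_cond_components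
      sum_lessThan_4 algebra_simps)

definition bob_test :: "complex \<Rightarrow> complex \<Rightarrow> (complex mat \<times> nat) list" where
  "bob_test e0 e1 = (if e0 = 0 \<and> e1 = 0 then [(1\<^sub>m 4, 0)]
     else local_round bob_op (basis_measurement e0 e1) [[(1\<^sub>m 4, 1)], [(1\<^sub>m 4, 0)]])"

definition walgate_protocol :: "complex \<Rightarrow> complex \<Rightarrow> complex vec \<Rightarrow> (complex mat \<times> nat) list" where
  "walgate_protocol u0 u1 \<psi>2 = local_round alice_op (basis_measurement u0 u1)
     [bob_test (bob_cond u0 u1 \<psi>2 0) (bob_cond u0 u1 \<psi>2 1),
      bob_test (bob_cond (- cnj u1) (cnj u0) \<psi>2 0) (bob_cond (- cnj u1) (cnj u0) \<psi>2 1)]"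

lemma bob_test_tree: "locc_tree (bob_test e0 e1)"
proof (cases "e0 = 0 \<and> e1 = 0")
  case True
  then show ?thesis by (simp add: bob_test_def locc_tree.stop)
next
  case False
  then have "e0 \<noteq> 0 \<or> e1 \<noteq> 0" by auto
  with False show ?thesis unfolding bob_test_def
    by (auto intro!: locc_tree_bob_round basis_measurement_complete locc_tree.stop)
qed

lemma walgate_protocol_tree:
  assumes "u0 \<noteq> 0 \<or> u1 \<noteq> 0"
  shows "locc_tree (walgate_protocol u0 u1 \<psi>2)"
  unfolding walgate_protocol_def
  by (rule locc_tree_alice_round) (use basis_measurement_complete[OF assms] in \<open>auto intro: bob_test_tree\<close>)

definition errorless :: "complex vec \<Rightarrow> complex vec \<Rightarrow> (complex mat \<times> nat) list \<Rightarrow> bool" where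
  "errorless v1 v2 L \<longleftrightarrow> (\<forall>(K, l)\<in>set L. K \<in> carrier_mat 4 4 \<and> l < 2 \<and>
     (l = 1 \<longrightarrow> K *\<^sub>v v1 = 0\<^sub>v 4) \<and> (l = 0 \<longrightarrow> K *\<^sub>v v2 = 0\<^sub>v 4))"

lemma alice_branch_errorless:
  assumes v1: "v1 \<in> carrier_vec 4" and v2: "v2 \<in> carrier_vec 4"
    and orth: "cond_overlap a0 a1 v1 v2 = 0"
  shows "errorless v1 v2 (map (\<lambda>(K, l). (K * alice_op (qubit_proj a0 a1), l))
                            (bob_test (bob_cond a0 a1 v2 0) (bob_cond a0 a1 v2 1)))"
proof (cases "bob_cond a0 a1 v2 0 = 0 \<and> bob_cond a0 a1 v2 1 = 0")
  case True
  have "alice_op (qubit_proj a0 a1) *\<^sub>v v2 = 0\<^sub>v 4"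
    by (rule local_product_annihilates[OF v2]) (use True in auto)
  then show ?thesis using True by (simp add: bob_test_def errorless_def)
next
  case False
  define e0 e1 where "e0 = bob_cond a0 a1 v2 0" and "e1 = bob_cond a0 a1 v2 1"
  have ne: "\<not> (e0 = 0 \<and> e1 = 0)" using False by (simp add: e0_def e1_def)
  have found: "tensor2 (qubit_proj a0 a1) (qubit_proj e0 e1) *\<^sub>v v1 = 0\<^sub>v 4"
  proof (rule local_product_annihilates[OF v1])
    fix i :: nat assume "i < 2"
    have "cnj e0 * bob_cond a0 a1 v1 0 + cnj e1 * bob_cond a0 a1 v1 1 = 0"
      using orth by (simp add: cond_overlap_def e0_def e1_def)
    then show "qubit_proj e0 e1 $$ (i, 0) * bob_cond a0 a1 v1 0
        + qubit_proj e0 e1 $$ (i, 1) * bob_cond a0 a1 v1 1 = 0"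
      by (rule qubit_proj_kills[OF \<open>i < 2\<close>])
  qed simp
  have missed: "tensor2 (qubit_proj a0 a1) (qubit_proj (- cnj e1) (cnj e0)) *\<^sub>v v2 = 0\<^sub>v 4"
  proof (rule local_product_annihilates[OF v2])
    fix i :: nat assume "i < 2"
    have "cnj (- cnj e1) * e0 + cnj (cnj e0) * e1 = 0" by simp
    then show "qubit_proj (- cnj e1) (cnj e0) $$ (i, 0) * bob_cond a0 a1 v2 0
        + qubit_proj (- cnj e1) (cnj e0) $$ (i, 1) * bob_cond a0 a1 v2 1 = 0"
      unfolding e0_def[symmetric] e1_def[symmetric] by (rule qubit_proj_kills[OF \<open>i < 2\<close>])
  qed simp
  have "map (\<lambda>(K, l). (K * alice_op (qubit_proj a0 a1), l)) (bob_test e0 e1)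
     = [(tensor2 (qubit_proj a0 a1) (qubit_proj e0 e1), 1),
        (tensor2 (qubit_proj a0 a1) (qubit_proj (- cnj e1) (cnj e0)), 0)]"
    using ne by (simp add: bob_test_def local_round_def basis_measurement_def tensor2_mult)
  then show ?thesis unfolding e0_def[symmetric] e1_def[symmetric] errorless_def
    using found missed by simp
qed

lemma walgate_protocol_errorless:
  assumes "v1 \<in> carrier_vec 4" "v2 \<in> carrier_vec 4"
    and "cond_overlap u0 u1 v1 v2 = 0" "cond_overlap (- cnj u1) (cnj u0) v1 v2 = 0"
  shows "errorless v1 v2 (walgate_protocol u0 u1 v2)"
proof -
  have "walgate_protocol u0 u1 v2
      = map (\<lambda>(K, l). (K * alice_op (qubit_proj u0 u1), l))
          (bob_test (bob_cond u0 u1 v2 0) (bob_cond u0 u1 v2 1))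
        @ map (\<lambda>(K, l). (K * alice_op (qubit_proj (- cnj u1) (cnj u0)), l))
          (bob_test (bob_cond (- cnj u1) (cnj u0) v2 0) (bob_cond (- cnj u1) (cnj u0) v2 1))"
    by (simp add: walgate_protocol_def local_round_def basis_measurement_def)
  then show ?thesis
    using alice_branch_errorless[OF assms(1,2,3)] alice_branch_errorless[OF assms(1,2,4)]
    unfolding errorless_def by (simp only: set_append ball_Un)
qed

lemma kraus_squares_annihilate:
  assumes "\<forall>(K, l)\<in>set xs. K \<in> carrier_mat 4 4 \<and> K *\<^sub>v v = 0\<^sub>v 4" and v: "v \<in> carrier_vec 4"
  shows "msum 4 (map kraus_square xs) *\<^sub>v v = 0\<^sub>v 4"
  using assms(1)
proof (induction xs)
  case Nil
  show ?case using v by (auto intro!: eq_vecI simp: scalar_prod_def)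
next
  case (Cons x xs)
  obtain K l where x: "x = (K, l)" by (cases x)
  have K: "K \<in> carrier_mat 4 4" "K *\<^sub>v v = 0\<^sub>v 4" using Cons.prems x by auto
  have sq: "kraus_square (K, l) \<in> carrier_mat 4 4" using K by (simp add: kraus_square_def)
  have rest: "msum 4 (map kraus_square xs) \<in> carrier_mat 4 4"
    using Cons.prems by (intro msum_carrier) (auto simp: kraus_square_def)
  have "kraus_square (K, l) *\<^sub>v v = mat_adjoint K *\<^sub>v (K *\<^sub>v v)"
    unfolding kraus_square_def using K v by (simp add: assoc_mult_mat_vec[of _ 4 4 _ 4])
  also have "\<dots> = 0\<^sub>v 4" by (rule eq_vecI) (use K in \<open>auto simp: scalar_prod_def\<close>)
  finally have "kraus_square (K, l) *\<^sub>v v = 0\<^sub>v 4" .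
  moreover have "msum 4 (map kraus_square (x # xs)) *\<^sub>v v
      = kraus_square (K, l) *\<^sub>v v + msum 4 (map kraus_square xs) *\<^sub>v v"
    using x add_mult_distrib_mat_vec[OF sq rest v] by simp
  ultimately show ?case using Cons by simp
qed

lemma trace_proj_annihilated:
  assumes M: "M \<in> carrier_mat 4 4" and v: "v \<in> carrier_vec 4" and z: "M *\<^sub>v v = 0\<^sub>v 4"
  shows "mtrace (M * proj v) = 0"
proof -
  have row: "(\<Sum>k<4. M $$ (i, k) * v $ k) = 0" if "i < 4" for i
  proof -
    have "(M *\<^sub>v v) $ i = 0" using z that by simp
    then show ?thesis using M v that by (simp add: mult_mat_vec_def scalar_prod_def atLeast0LessThan)
  qed
  have "mtrace (M * proj v) = (\<Sum>i<4. \<Sum>k<4. M $$ (i, k) * proj v $$ (k, i))"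
    by (rule mtrace_mult_4[OF M]) (simp add: proj_def)
  also have "\<dots> = (\<Sum>i<4. cnj (v $ i) * (\<Sum>k<4. M $$ (i, k) * v $ k))"
    by (intro sum.cong refl) (auto simp: proj_def sum_distrib_left algebra_simps intro!: sum.cong)
  also have "\<dots> = 0" using row by simp
  finally show ?thesis .
qed

lemma trace_proj_unit_state:
  assumes "unit_state v"
  shows "mtrace (proj v) = 1"
proof -
  have "mtrace (proj v) = (\<Sum>i<4. v $ i * cnj (v $ i))" by (simp add: mtrace_def proj_def)
  also have "\<dots> = (\<Sum>i<4. complex_of_real ((cmod (v $ i))\<^sup>2))"
    by (intro sum.cong refl) (rule complex_norm_square[symmetric])
  also have "\<dots> = complex_of_real (\<Sum>i<4. (cmod (v $ i))\<^sup>2)"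
    by (simp only: of_real_sum)
  also have "\<dots> = 1" using assms by (simp add: unit_state_def)
  finally show ?thesis .
qed

text \<open>An errorless LOCC protocol perfectly discriminates two pure states: the POVM element
  of the wrong guess annihilates each state, and the two elements add up to 1.\<close>

theorem errorless_locc_distinguishable:
  assumes tree: "locc_tree L" and ok: "errorless \<psi>1 \<psi>2 L"
    and unit: "unit_state \<psi>1" "unit_state \<psi>2"
  shows "locc_distinguishable [proj \<psi>1, proj \<psi>2]"
proof -
  have v: "\<psi>1 \<in> carrier_vec 4" "\<psi>2 \<in> carrier_vec 4" using unit by (auto simp: unit_state_def)
  have leaves: "\<forall>(K, l)\<in>set L. K \<in> carrier_mat 4 4" and labels: "\<forall>(K, l)\<in>set L. l < 2"
    using ok by (auto simp: errorless_def)
  have P: "povm_elem L 0 \<in> carrier_mat 4 4" "povm_elem L 1 \<in> carrier_mat 4 4"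
    using povm_elem_carrier[OF leaves] by auto
  have "povm_elem L 1 *\<^sub>v \<psi>1 = 0\<^sub>v 4"
    unfolding povm_elem_kraus_square using ok v by (intro kraus_squares_annihilate) (auto simp: errorless_def)
  then have wrong1: "mtrace (povm_elem L 1 * proj \<psi>1) = 0"
    using trace_proj_annihilated P v by blast
  have "povm_elem L 0 *\<^sub>v \<psi>2 = 0\<^sub>v 4"
    unfolding povm_elem_kraus_square using ok v by (intro kraus_squares_annihilate) (auto simp: errorless_def)
  then have wrong0: "mtrace (povm_elem L 0 * proj \<psi>2) = 0"
    using trace_proj_annihilated P v by blast
  have "filter (\<lambda>(K, l). l < 2) L = L" using labels by (auto simp: filter_id_conv)
  then have "msum 4 (map (povm_elem L) [0..<2]) = 1\<^sub>m 4"
    using povm_elems_sum[OF leaves, of 2] locc_tree_complete[OF tree] by simp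
  then have total: "povm_elem L 0 + povm_elem L 1 = 1\<^sub>m 4"
    using P by (simp add: upt_rec)
  have sum_one: "mtrace (povm_elem L 0 * proj v) + mtrace (povm_elem L 1 * proj v) = 1"
    if "unit_state v" for v
  proof -
    have pv: "proj v \<in> carrier_mat 4 4" by (simp add: proj_def)
    have "mtrace (povm_elem L 0 * proj v) + mtrace (povm_elem L 1 * proj v)
        = mtrace ((povm_elem L 0 + povm_elem L 1) * proj v)"
      using P pv by (simp add: add_mult_distrib_mat[of _ 4 4 _ _ 4] mtrace_add[of _ 4])
    then show ?thesis using total pv trace_proj_unit_state[OF that] by simp
  qed
  have "\<forall>i < 2. \<forall>j < 2. mtrace (povm_elem L i * [proj \<psi>1, proj \<psi>2] ! j) = (if i = j then 1 else 0)"
    using wrong0 wrong1 sum_one[OF unit(1)] sum_one[OF unit(2)] unfolding less_2_cases by auto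
  then show ?thesis
    unfolding locc_distinguishable_def using tree labels by (intro exI[of _ L]) auto
qed

lemma s1_components: "\<psi> \<in> s1 \<Longrightarrow> \<psi> $ 2 = 0 \<and> \<psi> $ 3 = \<psi> $ 0"
  unfolding s1_def by (auto simp: phi_plus_def ket_def)

lemma s2_components: "\<psi> \<in> s2 \<Longrightarrow> \<psi> $ 1 = 0 \<and> \<psi> $ 3 = - \<psi> $ 0"
  unfolding s2_def by (auto simp: phi_minus_def ket_def)

lemma s1_s2_orthogonal:
  assumes "\<psi>1 \<in> s1" "\<psi>2 \<in> s2"
  shows "(\<Sum>i<4. cnj (\<psi>2 $ i) * \<psi>1 $ i) = 0"
  using s1_components[OF assms(1)] s2_components[OF assms(2)] by (simp add: sum_lessThan_4)

text \<open>On s1 x s2 the conditional overlap is a traceless triangular sesquilinear form in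
  Alice's vector (a0, a1).\<close>

lemma cond_overlap_s1_s2:
  assumes "\<psi>1 \<in> s1" "\<psi>2 \<in> s2"
  shows "cond_overlap a0 a1 \<psi>1 \<psi>2
    = a0 * cnj a0 * (cnj (\<psi>2 $ 0) * \<psi>1 $ 0) - a1 * cnj a1 * (cnj (\<psi>2 $ 0) * \<psi>1 $ 0)
      + a1 * cnj a0 * (cnj (\<psi>2 $ 2) * \<psi>1 $ 0 - cnj (\<psi>2 $ 0) * \<psi>1 $ 1)"
  using s1_components[OF assms(1)] s2_components[OF assms(2)]
  by (simp add: cond_overlap_def bob_cond_components algebra_simps)

lemma triangular_form_isotropic:
  "\<exists>u0 u1. (u0 \<noteq> 0 \<or> u1 \<noteq> 0) \<and> u0 * cnj u0 * k - u1 * cnj u1 * k + u1 * cnj u0 * w = 0"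
proof (cases "k = 0 \<or> w = 0")
  case True
  then show ?thesis
  proof
    assume "k = 0" then show ?thesis by (intro exI[of _ 1] exI[of _ 0]) simp
  next
    assume "w = 0" then show ?thesis by (intro exI[of _ 1] exI[of _ 1]) simp
  qed
next
  case False
  then have k: "k \<noteq> 0" and w: "w \<noteq> 0" by auto
  define m where "m = (cmod k)\<^sup>2 / (cmod w)\<^sup>2"
  define x where "x = (sqrt (1 + 4 * m) - 1) / 2"
  have m0: "m \<ge> 0" by (simp add: m_def)
  have xm: "x\<^sup>2 + x = m"
    using m0 unfolding x_def by (simp add: power2_eq_square field_simps)
  have kk: "k / w * cnj (k / w) = complex_of_real m"
    using complex_norm_square[of "k / w"] by (simp add: m_def norm_divide power_divide)
  have "complex_of_real x * cnj (complex_of_real x) * k - k / w * cnj (k / w) * k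
      + k / w * cnj (complex_of_real x) * w = k * complex_of_real (x\<^sup>2 + x - m)"
    unfolding kk using w by (simp add: algebra_simps power2_eq_square)
  also have "\<dots> = 0" using xm by simp
  finally show ?thesis using k w by (intro exI[of _ "complex_of_real x"] exI[of _ "k / w"]) simp
qed

theorem s1_s2_pure_locc_distinguishable:
  assumes h1: "\<psi>1 \<in> s1" "unit_state \<psi>1" and h2: "\<psi>2 \<in> s2" "unit_state \<psi>2"
  shows "locc_distinguishable [proj \<psi>1, proj \<psi>2]"
proof -
  have v: "\<psi>1 \<in> carrier_vec 4" "\<psi>2 \<in> carrier_vec 4" using h1 h2 by (auto simp: unit_state_def)
  obtain u0 u1 where u: "u0 \<noteq> 0 \<or> u1 \<noteq> 0" and orth: "cond_overlap u0 u1 \<psi>1 \<psi>2 = 0"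
    using triangular_form_isotropic cond_overlap_s1_s2[OF h1(1) h2(1)] by metis
  have orth': "cond_overlap (- cnj u1) (cnj u0) \<psi>1 \<psi>2 = 0"
    using cond_overlap_complement[of u0 u1 \<psi>1 \<psi>2] orth s1_s2_orthogonal[OF h1(1) h2(1)] by simp
  have "locc_tree (walgate_protocol u0 u1 \<psi>2)" by (rule walgate_protocol_tree[OF u])
  moreover have "errorless \<psi>1 \<psi>2 (walgate_protocol u0 u1 \<psi>2)"
    by (rule walgate_protocol_errorless[OF v orth orth'])
  ultimately show ?thesis using errorless_locc_distinguishable h1(2) h2(2) by blast
qed

theorem mainTheorem5:
  fixes \<alpha> \<beta> :: real
  assumes "0 < \<alpha>" "\<alpha> < 1" "0 < \<beta>" "\<beta> < 1"
  shows "(\<forall>\<psi>1 \<psi>2. \<psi>1 \<in> s1 \<and> unit_state \<psi>1 \<and> \<psi>2 \<in> s2 \<and> unit_state \<psi>2 \<longrightarrow>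
            locc_distinguishable [proj \<psi>1, proj \<psi>2])
         \<and> \<not> locc_distinguishable [sigma1 \<alpha>, sigma2 \<beta>]
         \<and> \<not> sep_distinguishable [sigma1 \<alpha>, sigma2 \<beta>]"
proof -
  have not_sep: "\<not> sep_distinguishable [sigma1 \<alpha>, sigma2 \<beta>]"
    using detects_ket00_not_sep_distinguishable sigma1_detects_ket00 sigma2_detects_ket00 assms by blast
  then have "\<not> locc_distinguishable [sigma1 \<alpha>, sigma2 \<beta>]"
    using locc_implies_sep_distinguishable by blast
  with not_sep show ?thesis
    using s1_s2_pure_locc_distinguishable by blast
qed

end
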